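(* Let $E$ be a (Hausdorff, real) topological vector space. Every infinite absolutely Cauchy summable subset $S$ of $E$ contains an infinite subset $B$ such that the linear Kalton map $lK_B:lS_B\to E$ is a topologically isomorphic embedding.
   Context: For $b\in E$, $\mathbb{R}b=\{rb:r\in\mathbb{R}\}$ with the subspace topology. For $B\subseteq E\setminus\{0\}$, $lS_B=\bigoplus_{b\in B}\mathbb{R}b$ is the set of finitely supported elements of $\prod_{b\in B}\mathbb{R}b$, with the subspace topology of the Tychonoff product topology (so $lS_B\cong\mathbb{R}^{(B)}$). The linear Kalton map $lK_B:lS_B\to E$ is the unique linear map extending each inclusion $\mathbb{R}b\to E$, $b\in B$. A subset $S\subseteq E$ is absolutely Cauchy summable if for every neighbourhood $U$ of $0$ there is a finite $F\subseteq S$ such that the additive subgroup generated by $S\setminus F$ is contained in $U$. *)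

theory Defs
  imports "HOL-Analysis.Analysis"
begin

definition add_subgroup_generated :: "'a::ab_group_add set \<Rightarrow> 'a set" where
  "add_subgroup_generated A =
     \<Inter>{G. A \<subseteq> G \<and> 0 \<in> G \<and> (\<forall>x\<in>G. \<forall>y\<in>G. x - y \<in> G)}"

definition abs_cauchy_summable :: "'a::{ab_group_add,topological_space} set \<Rightarrow> bool" where
  "abs_cauchy_summable S \<longleftrightarrow>
     (\<forall>U. (\<exists>V. open V \<and> 0 \<in> V \<and> V \<subseteq> U) \<longrightarrow>
        (\<exists>F. finite F \<and> F \<subseteq> S \<and> add_subgroup_generated (S - F) \<subseteq> U))"

definition real_line_top :: "'a::{real_vector,topological_space} \<Rightarrow> 'a topology" where
  "real_line_top b = subtopology euclidean (range (\<lambda>r::real. r *\<^sub>R b))"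

text \<open>Elements are the
  (extensional) functions f on B with f b in R b, finitely many nonzero.\<close>
definition lS :: "'a::{real_vector,topological_space} set \<Rightarrow> ('a \<Rightarrow> 'a) topology" where
  "lS B = subtopology (product_topology real_line_top B)
            {f. finite {b\<in>B. f b \<noteq> 0}}"

definition lK :: "'a::real_vector set \<Rightarrow> ('a \<Rightarrow> 'a) \<Rightarrow> 'a" where
  "lK B f = (\<Sum>b\<in>{b\<in>B. f b \<noteq> 0}. f b)"

end

theory Submission
  imports Defs
begin

text \<open>The set \<open>B = {b\<^sub>0, b\<^sub>1, \<dots>}\<close> is chosen inductively. Once \<open>b\<^sub>0, \<dots>, b\<^bsub>n-1\<^esub>\<close>
  are linearly independent, their combinations whose largest coefficient has modulus \<open>1\<close> form a
  compact set missing \<open>0\<close>, so some neighbourhood \<open>Q\<^sub>n\<close> of \<open>0\<close> forces all coefficients of a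
  combination in \<open>Q\<^sub>n + Q\<^sub>n\<close> to have modulus \<open>< 1\<close>. Absolute Cauchy summability yields a
  finite \<open>F\<^sub>n \<subseteq> S\<close> with \<open>span (S - F\<^sub>n) \<subseteq> Q\<^sub>n\<close>, and all later \<open>b\<^sub>m\<close> avoid \<open>F\<^sub>n\<close>. Consequently
  \<open>B\<close> is linearly independent, and each coordinate functional on \<open>span B\<close> is continuous: the
  tail of a vector lies in \<open>Q\<^sub>n\<close>, so a vector in \<open>\<epsilon> Q\<^sub>n\<close> has its first \<open>n\<close> coordinates below
  \<open>\<epsilon>\<close>. Finally \<open>lK\<^sub>B\<close> is continuous because the spans of cofinite parts of \<open>B\<close> are small, and its
  inverse on \<open>span B\<close> is continuous because it is given by the coordinate functionals.\<close>

lemma open_translate_preimage: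
  fixes U :: "'a::topological_group_add set"
  assumes "open U"
  shows "open {x. x + a \<in> U}"
  using open_vimage[OF assms, of "\<lambda>x. x + a"] by (simp add: vimage_def continuous_intros)

lemma open_zero_nbhd_add_subset:
  fixes U :: "'a::topological_monoid_add set"
  assumes "open U" "0 \<in> U"
  obtains V where "open V" "0 \<in> V" "\<And>x y. x \<in> V \<Longrightarrow> y \<in> V \<Longrightarrow> x + y \<in> U"
proof -
  have "open ((\<lambda>p::'a \<times> 'a. fst p + snd p) -` U)"
    by (rule open_vimage[OF assms(1)]) (intro continuous_intros)
  moreover have "(0, 0) \<in> (\<lambda>p::'a \<times> 'a. fst p + snd p) -` U"
    using assms(2) by simp
  ultimately obtain V1 V2 where "open V1" "open V2" "(0, 0) \<in> V1 \<times> V2"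
      "V1 \<times> V2 \<subseteq> (\<lambda>p. fst p + snd p) -` U"
    by (rule open_prod_elim)
  then show ?thesis
    by (intro that[of "V1 \<inter> V2"]) auto
qed

lemma continuous_on_additive_real:
  fixes h :: "'a::topological_group_add \<Rightarrow> real"
  assumes diff: "\<And>x y. x \<in> V \<Longrightarrow> y \<in> V \<Longrightarrow> x - y \<in> V \<and> h (x - y) = h x - h y"
    and small: "\<And>e. e > 0 \<Longrightarrow> \<exists>W. open W \<and> 0 \<in> W \<and> (\<forall>y\<in>V \<inter> W. \<bar>h y\<bar> < e)"
  shows "continuous_on V h"
  unfolding continuous_on_def
proof (intro ballI tendstoI)
  fix x and e :: real
  assume "x \<in> V" "e > 0"
  then obtain W where W: "open W" "0 \<in> W" "\<forall>y\<in>V \<inter> W. \<bar>h y\<bar> < e"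
    using small by blast
  have "open {y. y + - x \<in> W}"
    using W(1) by (rule open_translate_preimage)
  moreover have "\<bar>h y - h x\<bar> < e" if "y \<in> V" "y + - x \<in> W" for y
  proof -
    have "y - x \<in> V \<inter> W" "h (y - x) = h y - h x"
      using diff[OF that(1) \<open>x \<in> V\<close>] that(2) by auto
    then show ?thesis
      using W(3) by metis
  qed
  ultimately show "\<forall>\<^sub>F y in at x within V. dist (h y) (h x) < e"
    unfolding eventually_at_topological using \<open>x \<in> V\<close> W(2)
    by (intro exI[of _ "{y. y + - x \<in> W}"]) (auto simp: dist_real_def)
qed

lemma continuous_map_sum_euclidean:
  fixes f :: "'i \<Rightarrow> 'b \<Rightarrow> 'a::topological_comm_monoid_add"
  assumes "finite I" "\<And>i. i \<in> I \<Longrightarrow> continuous_map X euclidean (f i)"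
  shows "continuous_map X euclidean (\<lambda>x. \<Sum>i\<in>I. f i x)"
  using assms by (simp add: continuous_map_atin tendsto_sum)

lemma tendsto_floor_approx_remainder:
  "((\<lambda>m. u - of_int \<lfloor>real m * u\<rfloor> / real m) \<longlongrightarrow> 0) sequentially"
proof (rule tendsto_sandwich[OF _ _ tendsto_const lim_inverse_n'])
  have "0 \<le> u - of_int \<lfloor>real m * u\<rfloor> / real m \<and> u - of_int \<lfloor>real m * u\<rfloor> / real m \<le> 1 / real m"
    if "m > 0" for m
  proof -
    have "of_int \<lfloor>real m * u\<rfloor> \<le> real m * u" "real m * u - of_int \<lfloor>real m * u\<rfloor> \<le> 1"
      by linarith+
    moreover have "u - of_int \<lfloor>real m * u\<rfloor> / real m = (real m * u - of_int \<lfloor>real m * u\<rfloor>) / real m"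
      using that by (simp add: field_simps)
    ultimately show ?thesis
      using that by (auto intro: divide_nonneg_pos divide_right_mono)
  qed
  then show "\<forall>\<^sub>F m in sequentially. 0 \<le> u - of_int \<lfloor>real m * u\<rfloor> / real m"
    "\<forall>\<^sub>F m in sequentially. u - of_int \<lfloor>real m * u\<rfloor> / real m \<le> 1 / real m"
    by (auto simp: eventually_sequentially intro!: exI[of _ 1])
qed

lemma infinite_avoiding_sequence:
  fixes F :: "'a set \<Rightarrow> 'a set"
  assumes "infinite S" and "\<And>A. finite (F A)"
  obtains b :: "nat \<Rightarrow> 'a" where "inj b" "range b \<subseteq> S" "\<forall>n. \<forall>m\<le>n. b n \<notin> F (b ` {..<m})"
proof -
  define avoid where "avoid xs = set xs \<union> (\<Union>m\<le>length xs. F (set (take m xs)))" for xs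
  define pick where "pick xs = (SOME x. x \<in> S - avoid xs)" for xs
  have pick: "pick xs \<in> S - avoid xs" for xs
  proof -
    have "finite (avoid xs)"
      unfolding avoid_def by (simp add: assms(2))
    then have "S - avoid xs \<noteq> {}"
      by (intro infinite_imp_nonempty Diff_infinite_finite assms(1))
    then show ?thesis
      unfolding pick_def by (rule some_in_eq[THEN iffD2])
  qed
  define prefix where "prefix = rec_nat [] (\<lambda>_ xs. xs @ [pick xs])"
  define b where "b n = pick (prefix n)" for n
  have prefix: "prefix n = map b [0..<n]" for n
    by (induction n) (simp_all add: prefix_def b_def)
  have avoid: "avoid (prefix n) = b ` {..<n} \<union> (\<Union>m\<le>n. F (b ` {..<m}))" for n
    unfolding avoid_def prefix by (auto simp: take_map atLeast0LessThan)
  have b_pick: "b n \<in> S - avoid (prefix n)" for n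
    unfolding b_def by (rule pick)
  have fresh: "b n \<notin> b ` {..<n}" and in_S: "b n \<in> S" for n
    using b_pick[of n] unfolding avoid by auto
  have avoids: "\<forall>n. \<forall>m\<le>n. b n \<notin> F (b ` {..<m})"
    using b_pick unfolding avoid by blast
  have "inj b"
  proof (rule linorder_injI)
    show "b m \<noteq> b n" if "m < n" for m n
      using fresh[of n] that by (metis imageI lessThan_iff)
  qed
  moreover have "range b \<subseteq> S"
    using in_S by auto
  ultimately show ?thesis
    using avoids by (rule that)
qed

lemma add_subgroup_generated_mono:
  "A \<subseteq> B \<Longrightarrow> add_subgroup_generated A \<subseteq> add_subgroup_generated B"
  unfolding add_subgroup_generated_def by auto

lemma abs_cauchy_summableD:
  assumes "abs_cauchy_summable S" "open V" "0 \<in> V"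
  obtains F where "finite F" "F \<subseteq> S" "add_subgroup_generated (S - F) \<subseteq> V"
  using assms unfolding abs_cauchy_summable_def by (meson order_refl)

lemma abs_cauchy_summable_subset:
  assumes "abs_cauchy_summable S" "B \<subseteq> S"
  shows "abs_cauchy_summable B"
  unfolding abs_cauchy_summable_def
proof (intro allI impI)
  fix U :: "'a set"
  assume "\<exists>V. open V \<and> 0 \<in> V \<and> V \<subseteq> U"
  then obtain F where F: "finite F" "F \<subseteq> S" "add_subgroup_generated (S - F) \<subseteq> U"
    using assms(1) unfolding abs_cauchy_summable_def by meson
  have "add_subgroup_generated (B - F \<inter> B) \<subseteq> add_subgroup_generated (S - F)"
    using assms(2) by (intro add_subgroup_generated_mono) auto
  then show "\<exists>F. finite F \<and> F \<subseteq> B \<and> add_subgroup_generated (B - F) \<subseteq> U"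
    using F by (intro exI[of _ "F \<inter> B"]) auto
qed

lemma add_subgroup_generated_int_combination:
  fixes A :: "'a::real_vector set"
  assumes "finite T" "T \<subseteq> A"
  shows "(\<Sum>y\<in>T. of_int (k y) *\<^sub>R y) \<in> add_subgroup_generated A"
  unfolding add_subgroup_generated_def
proof (rule InterI)
  fix G
  assume "G \<in> {G. A \<subseteq> G \<and> 0 \<in> G \<and> (\<forall>x\<in>G. \<forall>y\<in>G. x - y \<in> G)}"
  then have G: "A \<subseteq> G" "0 \<in> G" "\<And>x y. x \<in> G \<Longrightarrow> y \<in> G \<Longrightarrow> x - y \<in> G"
    by auto
  have add: "x + y \<in> G" if "x \<in> G" "y \<in> G" for x y
    using G(3)[OF that(1) G(3)[OF G(2) that(2)]] by simp
  have int: "of_int j *\<^sub>R y \<in> G" if "y \<in> G" for j y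
  proof (induction j rule: int_induct[where k = 0])
    case (step1 i)
    then show ?case
      using add[OF step1(2) that] by (simp add: algebra_simps)
  next
    case (step2 i)
    then show ?case
      using G(3)[OF step2(2) that] by (simp add: algebra_simps)
  qed (simp add: G(2))
  show "(\<Sum>y\<in>T. of_int (k y) *\<^sub>R y) \<in> G"
    using assms
  proof (induction T rule: finite_induct)
    case (insert x T)
    then have "x \<in> G" "(\<Sum>y\<in>T. of_int (k y) *\<^sub>R y) \<in> G"
      using G(1) by auto
    then show ?case
      using insert.hyps by (simp add: add int)
  qed (simp add: G(2))
qed

lemma representation_minus_sum_in_span:
  assumes B: "independent B" and A: "finite A" "A \<subseteq> B" and y: "y \<in> span B"
  shows "y - (\<Sum>z\<in>A. representation B y z *\<^sub>R z) \<in> span (B - A)"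
proof -
  let ?R = "{z. representation B y z \<noteq> 0}"
  have R: "finite ?R" "?R \<subseteq> B"
    using representation_ne_zero finite_representation by auto
  have "(\<Sum>z\<in>A. representation B y z *\<^sub>R z) = (\<Sum>z\<in>?R \<inter> A. representation B y z *\<^sub>R z)"
    using A(1) by (intro sum.mono_neutral_right) auto
  moreover have "y = (\<Sum>z\<in>?R. representation B y z *\<^sub>R z)"
    using sum_nonzero_representation_eq[OF B y] by simp
  moreover have "\<dots> = (\<Sum>z\<in>?R \<inter> A. representation B y z *\<^sub>R z) + (\<Sum>z\<in>?R - A. representation B y z *\<^sub>R z)"
    by (rule sum.Int_Diff[OF R(1)])
  ultimately have "y - (\<Sum>z\<in>A. representation B y z *\<^sub>R z) = (\<Sum>z\<in>?R - A. representation B y z *\<^sub>R z)"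
    by (simp add: algebra_simps)
  also have "\<dots> \<in> span (B - A)"
    using R(2) by (intro span_sum span_scale span_base) auto
  finally show ?thesis .
qed

lemma independent_range_if_prefixes:
  fixes b :: "nat \<Rightarrow> 'a::real_vector"
  assumes "\<And>n. independent (b ` {..<n})"
  shows "independent (range b)"
proof -
  have "independent (\<Union> (range (\<lambda>n. b ` {..<n})))"
  proof (rule independent_Union_directed)
    show "c \<subseteq> d \<or> d \<subseteq> c"
      if cd: "c \<in> range (\<lambda>n. b ` {..<n})" "d \<in> range (\<lambda>n. b ` {..<n})" for c d
    proof -
      obtain i j where "c = b ` {..<i}" "d = b ` {..<j}"
        using cd by blast
      then show ?thesis
        using nat_le_linear[of i j] by (auto intro!: image_mono)
    qed
  qed (use assms in auto)
  moreover have "\<Union> (range (\<lambda>n. b ` {..<n})) = range b"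
    by (auto intro: lessI)
  ultimately show ?thesis
    by simp
qed

lemma exists_normalising_factor:
  fixes r :: "'a \<Rightarrow> real"
  assumes "finite A" "x \<in> A" "1 \<le> \<bar>r x\<bar>"
  obtains l where "1 \<le> l" "\<forall>z\<in>A. \<bar>r z / l\<bar> \<le> 1" "\<exists>z\<in>A. \<bar>r z / l\<bar> = 1"
proof -
  define l where "l = Max ((\<lambda>z. \<bar>r z\<bar>) ` A)"
  have le_l: "\<bar>r z\<bar> \<le> l" if "z \<in> A" for z
    unfolding l_def using assms(1) that by auto
  then have "1 \<le> l"
    using assms(2,3) by force
  moreover have "l \<in> (\<lambda>z. \<bar>r z\<bar>) ` A"
    unfolding l_def using assms(1,2) by (intro Max_in) auto
  ultimately show ?thesis
    using le_l by (intro that[of l]) auto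
qed

definition coeff_bounding_nbhd :: "'a::{real_vector, topological_space} set \<Rightarrow> 'a set \<Rightarrow> bool" where
  "coeff_bounding_nbhd A Q \<longleftrightarrow> open Q \<and> 0 \<in> Q \<and>
     (\<forall>r p q. p \<in> Q \<longrightarrow> q \<in> Q \<longrightarrow> (\<Sum>x\<in>A. r x *\<^sub>R x) = p + q \<longrightarrow> (\<forall>x\<in>A. \<bar>r x\<bar> < 1))"

lemma coeff_bounding_nbhdD:
  assumes "coeff_bounding_nbhd A Q" "p \<in> Q" "q \<in> Q" "(\<Sum>x\<in>A. r x *\<^sub>R x) = p + q" "x \<in> A"
  shows "\<bar>r x\<bar> < 1"
  using assms unfolding coeff_bounding_nbhd_def by blast

lemma coeff_bounding_nbhd_not_in_span:
  assumes A: "finite A" and Q: "coeff_bounding_nbhd A Q" and b: "span {b} \<subseteq> Q" "b \<noteq> 0"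
  shows "b \<notin> span A"
proof
  assume "b \<in> span A"
  then obtain u where u: "b = (\<Sum>x\<in>A. u x *\<^sub>R x)"
    using span_finite[OF A] by auto
  moreover have "b = 0" if "\<forall>x\<in>A. u x = 0"
    unfolding u using that by simp
  ultimately obtain x where x: "x \<in> A" "u x \<noteq> 0"
    using b(2) by blast
  define t where "t = 1 / \<bar>u x\<bar>"
  have "(\<Sum>z\<in>A. (t * u z) *\<^sub>R z) = t *\<^sub>R b + 0"
    unfolding u by (simp add: scaleR_sum_right)
  moreover have "t *\<^sub>R b \<in> Q"
    using b(1) span_scale[OF span_base[of b "{b}"]] by blast
  moreover have "0 \<in> Q"
    using Q unfolding coeff_bounding_nbhd_def by blast
  ultimately have "\<bar>t * u x\<bar> < 1"
    by (intro coeff_bounding_nbhdD[OF Q _ _ _ x(1)])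
  then show False
    using x(2) by (simp add: t_def abs_mult)
qed

lemma topspace_lS:
  "topspace (lS B) = {f \<in> (\<Pi>\<^sub>E b\<in>B. range (\<lambda>r::real. r *\<^sub>R b)). finite {b\<in>B. f b \<noteq> 0}}"
  unfolding lS_def real_line_top_def by auto

lemma lK_eq_sum:
  assumes "finite G" "G \<subseteq> B" "{b\<in>B. f b \<noteq> 0} \<subseteq> G"
  shows "lK B f = sum f G"
  unfolding lK_def using assms by (intro sum.mono_neutral_left) auto

lemma lK_minus_sum_in_span:
  assumes f: "f \<in> topspace (lS B)" and G: "finite G" "G \<subseteq> B"
  shows "lK B f - sum f G \<in> span (B - G)"
proof -
  let ?supp = "{b\<in>B. f b \<noteq> 0}"
  have fin: "finite ?supp" and line: "\<And>b. b \<in> B \<Longrightarrow> f b \<in> range (\<lambda>r::real. r *\<^sub>R b)"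
    using f by (auto simp: topspace_lS PiE_iff)
  have "lK B f = sum f (G \<union> ?supp)"
    using G fin by (intro lK_eq_sum) auto
  also have "\<dots> = sum f (G \<union> (?supp - G))"
    by (simp add: Un_Diff_cancel)
  also have "\<dots> = sum f G + sum f (?supp - G)"
    using G fin by (intro sum.union_disjoint) auto
  finally have "lK B f - sum f G = sum f (?supp - G)"
    by simp
  also have "\<dots> \<in> span (B - G)"
  proof (intro span_sum)
    fix b
    assume "b \<in> ?supp - G"
    then obtain r :: real where "f b = r *\<^sub>R b" "b \<in> B - G"
      using line by blast
    then show "f b \<in> span (B - G)"
      by (simp add: span_base span_scale)
  qed
  finally show ?thesis .
qed

lemma lK_in_span: "f \<in> topspace (lS B) \<Longrightarrow> lK B f \<in> span B"
  using lK_minus_sum_in_span[of f B "{}"] by simp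

lemma representation_lK:
  assumes B: "independent B" and f: "f \<in> topspace (lS B)" and x: "x \<in> B"
  shows "representation B (lK B f) x *\<^sub>R x = f x"
proof -
  have "\<forall>b\<in>B. \<exists>r. f b = r *\<^sub>R b"
    using f by (auto simp: topspace_lS PiE_iff)
  then obtain c where c: "\<And>b. b \<in> B \<Longrightarrow> f b = c b *\<^sub>R b"
    by metis
  define c' where "c' b = (if b \<in> B \<and> f b \<noteq> 0 then c b else 0)" for b
  have supp: "{b. c' b \<noteq> 0} = {b\<in>B. f b \<noteq> 0}"
    unfolding c'_def using c by (auto split: if_splits)
  have "representation B (lK B f) = c'"
  proof (rule representation_eqI[OF B lK_in_span[OF f]])
    show "finite {b. c' b \<noteq> 0}"
      unfolding supp using f by (simp add: topspace_lS)
    show "(\<Sum>b | c' b \<noteq> 0. c' b *\<^sub>R b) = lK B f"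
      unfolding supp lK_def using c by (intro sum.cong) (auto simp: c'_def)
  qed (auto simp: c'_def split: if_splits)
  moreover have "c' x *\<^sub>R x = f x"
    using c[OF x] x by (auto simp: c'_def)
  ultimately show ?thesis
    by simp
qed

lemma continuous_map_lS_eval:
  assumes "x \<in> B"
  shows "continuous_map (lS B) euclidean (\<lambda>f. f x)"
proof -
  have "continuous_map (product_topology real_line_top B) (real_line_top x) (\<lambda>f. f x)"
    by (rule continuous_map_product_projection[OF assms])
  then have "continuous_map (product_topology real_line_top B) euclidean (\<lambda>f. f x)"
    unfolding real_line_top_def by (rule continuous_map_into_fulltopology)
  then show ?thesis
    unfolding lS_def by (rule continuous_map_from_subtopology)
qed

context
  assumes scaleR_continuous:
    "continuous_on UNIV (\<lambda>p::real \<times> 'a::{real_vector, topological_ab_group_add, t2_space}. fst p *\<^sub>R snd p)"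
begin

lemma tendsto_scaleR_tvs:
  fixes g :: "'b \<Rightarrow> 'a"
  assumes "(f \<longlongrightarrow> a) F" "(g \<longlongrightarrow> c) F"
  shows "((\<lambda>x. f x *\<^sub>R g x) \<longlongrightarrow> a *\<^sub>R c) F"
proof -
  have "isCont (\<lambda>p::real \<times> 'a. fst p *\<^sub>R snd p) (a, c)"
    using scaleR_continuous by (simp add: continuous_on_eq_continuous_at)
  from isCont_tendsto_compose[OF this tendsto_Pair[OF assms]] show ?thesis
    by simp
qed

lemma continuous_on_scaleR_tvs:
  fixes g :: "'b::topological_space \<Rightarrow> 'a"
  assumes "continuous_on A f" "continuous_on A g"
  shows "continuous_on A (\<lambda>x. f x *\<^sub>R g x)"
  using assms unfolding continuous_on_def by (auto intro: tendsto_scaleR_tvs)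

lemma open_scaleR_image:
  fixes U :: "'a set"
  assumes "open U" "c \<noteq> 0"
  shows "open ((\<lambda>x. c *\<^sub>R x) ` U)"
proof -
  have "(\<lambda>x. c *\<^sub>R x) ` U = (\<lambda>x. inverse c *\<^sub>R x) -` U"
    using assms(2) by (force simp: image_iff)
  moreover have "open ((\<lambda>x. inverse c *\<^sub>R x) -` U)"
    by (rule open_vimage[OF assms(1)]) (intro continuous_on_scaleR_tvs continuous_intros)
  ultimately show ?thesis
    by simp
qed

lemma balanced_open_zero_nbhd:
  fixes U :: "'a set"
  assumes "open U" "0 \<in> U"
  obtains V where "open V" "0 \<in> V" "V \<subseteq> U" "\<And>x t. x \<in> V \<Longrightarrow> \<bar>t\<bar> \<le> 1 \<Longrightarrow> t *\<^sub>R x \<in> V"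
proof -
  have "open ((\<lambda>p::real \<times> 'a. fst p *\<^sub>R snd p) -` U)"
    by (rule open_vimage[OF assms(1) scaleR_continuous])
  moreover have "(0, 0) \<in> (\<lambda>p::real \<times> 'a. fst p *\<^sub>R snd p) -` U"
    using assms(2) by simp
  ultimately obtain D W where DW: "open D" "open W" "(0, 0) \<in> D \<times> W"
      "D \<times> W \<subseteq> (\<lambda>p. fst p *\<^sub>R snd p) -` U"
    by (rule open_prod_elim)
  then obtain d where d: "d > 0" "ball 0 d \<subseteq> D"
    by (meson mem_Sigma_iff openE)
  have small: "t *\<^sub>R x \<in> U" if "\<bar>t\<bar> < d" "x \<in> W" for t x
    using DW(4) d(2) that by (force simp: dist_real_def)
  define V where "V = (\<Union>s\<in>{s. 0 < \<bar>s\<bar> \<and> \<bar>s\<bar> < d}. (\<lambda>x. s *\<^sub>R x) ` W)"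
  show ?thesis
  proof (rule that)
    show "open V"
      unfolding V_def using DW(2) by (intro open_UN ballI open_scaleR_image) auto
    show "0 \<in> V"
      unfolding V_def using DW(3) d(1) by (intro UN_I[of "d / 2"]) (auto intro!: image_eqI[of _ _ 0])
    show "V \<subseteq> U"
      unfolding V_def using small by auto
    show "t *\<^sub>R x \<in> V" if "x \<in> V" "\<bar>t\<bar> \<le> 1" for x t
    proof (cases "t = 0")
      case True
      then show ?thesis
        using \<open>0 \<in> V\<close> by simp
    next
      case False
      from \<open>x \<in> V\<close> obtain s w where sw: "0 < \<bar>s\<bar>" "\<bar>s\<bar> < d" "w \<in> W" "x = s *\<^sub>R w"
        unfolding V_def by auto
      have "\<bar>t * s\<bar> < d"
        using sw(2) \<open>\<bar>t\<bar> \<le> 1\<close> mult_left_le_one_le[of "\<bar>s\<bar>" "\<bar>t\<bar>"] by (simp add: abs_mult)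
      then show ?thesis
        unfolding V_def using sw False by (intro UN_I[of "t * s"]) auto
    qed
  qed
qed

lemma abs_cauchy_summable_span_small:
  fixes S :: "'a set"
  assumes acs: "abs_cauchy_summable S" and U: "open U" "0 \<in> U"
  obtains F where "finite F" "F \<subseteq> S" "span (S - F) \<subseteq> U"
proof -
  obtain V0 where V0: "open V0" "0 \<in> V0" "\<And>x y. x \<in> V0 \<Longrightarrow> y \<in> V0 \<Longrightarrow> x + y \<in> U"
    using open_zero_nbhd_add_subset[OF U] by blast
  obtain V where V: "open V" "0 \<in> V" "V \<subseteq> V0" "\<And>x t. x \<in> V \<Longrightarrow> \<bar>t\<bar> \<le> 1 \<Longrightarrow> t *\<^sub>R x \<in> V"
    using balanced_open_zero_nbhd[OF V0(1,2)] by blast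
  obtain F where F: "finite F" "F \<subseteq> S" "add_subgroup_generated (S - F) \<subseteq> V"
    using abs_cauchy_summableD[OF acs V(1,2)] by blast
  have "x \<in> U" if "x \<in> span (S - F)" for x
  proof -
    from that obtain T u where T: "finite T" "T \<subseteq> S - F" and x: "x = (\<Sum>y\<in>T. u y *\<^sub>R y)"
      unfolding span_explicit by blast
    \<comment> \<open>Approximate the coefficients by multiples of \<open>1/m\<close>: the integer part lies in the
      subgroup, the remainder tends to \<open>0\<close>.\<close>
    define k where "k m y = \<lfloor>real m * u y\<rfloor>" for m :: nat and y
    define err where "err m = (\<Sum>y\<in>T. (u y - of_int (k m y) / real m) *\<^sub>R y)" for m
    have "(err \<longlongrightarrow> (\<Sum>y\<in>T. 0 *\<^sub>R y)) sequentially"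
      unfolding err_def k_def by (intro tendsto_sum tendsto_scaleR_tvs tendsto_floor_approx_remainder tendsto_const)
    then have "(err \<longlongrightarrow> 0) sequentially"
      by simp
    then have "\<forall>\<^sub>F m in sequentially. err m \<in> V0"
      using V0(1,2) by (rule topological_tendstoD)
    then obtain N where "\<And>n. n \<ge> N \<Longrightarrow> err n \<in> V0"
      unfolding eventually_sequentially by blast
    then have "err (Suc N) \<in> V0"
      by simp
    then obtain m where m: "m > 0" "err m \<in> V0"
      using zero_less_Suc by blast
    have "(1 / real m) *\<^sub>R (\<Sum>y\<in>T. of_int (k m y) *\<^sub>R y) + err m
        = (\<Sum>y\<in>T. (of_int (k m y) / real m + (u y - of_int (k m y) / real m)) *\<^sub>R y)"
      unfolding err_def scaleR_add_left sum.distrib scaleR_sum_right by simp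
    then have "x = (1 / real m) *\<^sub>R (\<Sum>y\<in>T. of_int (k m y) *\<^sub>R y) + err m"
      unfolding x by simp
    moreover have "(1 / real m) *\<^sub>R (\<Sum>y\<in>T. of_int (k m y) *\<^sub>R y) \<in> V0"
    proof -
      have "(\<Sum>y\<in>T. of_int (k m y) *\<^sub>R y) \<in> V"
        using add_subgroup_generated_int_combination[OF T] F(3) by blast
      then show ?thesis
        using V(3,4) m(1) by auto
    qed
    ultimately show "x \<in> U"
      using V0(3) m(2) by simp
  qed
  then show ?thesis
    using F that by blast
qed

lemma compact_finite_combinations:
  fixes A :: "'a set"
  assumes "finite A" "\<And>x. x \<in> A \<Longrightarrow> compact (P x)"
  shows "compact {\<Sum>x\<in>A. r x *\<^sub>R x | r. \<forall>x\<in>A. r x \<in> P x}"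
  using assms
proof (induction A rule: finite_induct)
  case (insert a A)
  let ?K = "{\<Sum>x\<in>A. r x *\<^sub>R x | r. \<forall>x\<in>A. r x \<in> P x}"
  have eq: "{\<Sum>x\<in>insert a A. r x *\<^sub>R x | r. \<forall>x\<in>insert a A. r x \<in> P x}
      = (\<lambda>z. fst z + snd z *\<^sub>R a) ` (?K \<times> P a)"
  proof (intro equalityI subsetI)
    fix y
    assume "y \<in> {\<Sum>x\<in>insert a A. r x *\<^sub>R x | r. \<forall>x\<in>insert a A. r x \<in> P x}"
    then obtain r where r: "\<forall>x\<in>insert a A. r x \<in> P x" "y = (\<Sum>x\<in>insert a A. r x *\<^sub>R x)"
      by blast
    have "(\<Sum>x\<in>A. r x *\<^sub>R x, r a) \<in> ?K \<times> P a"
      using r(1) by blast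
    moreover have "y = (\<Sum>x\<in>A. r x *\<^sub>R x) + r a *\<^sub>R a"
      using insert.hyps r(2) by (simp add: add.commute)
    ultimately show "y \<in> (\<lambda>z. fst z + snd z *\<^sub>R a) ` (?K \<times> P a)"
      by force
  next
    fix y
    assume "y \<in> (\<lambda>z. fst z + snd z *\<^sub>R a) ` (?K \<times> P a)"
    then obtain r t where r: "\<forall>x\<in>A. r x \<in> P x" "t \<in> P a" "y = (\<Sum>x\<in>A. r x *\<^sub>R x) + t *\<^sub>R a"
      by auto
    have "(\<Sum>x\<in>A. (r(a := t)) x *\<^sub>R x) = (\<Sum>x\<in>A. r x *\<^sub>R x)"
      using insert.hyps by (intro sum.cong) auto
    then have "y = (\<Sum>x\<in>insert a A. (r(a := t)) x *\<^sub>R x)"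
      using insert.hyps r(3) by (simp add: add.commute)
    moreover have "\<forall>x\<in>insert a A. (r(a := t)) x \<in> P x"
      using r(1,2) by auto
    ultimately show "y \<in> {\<Sum>x\<in>insert a A. r x *\<^sub>R x | r. \<forall>x\<in>insert a A. r x \<in> P x}"
      by (intro CollectI exI[of _ "r(a := t)"]) simp
  qed
  have "compact (?K \<times> P a)"
    using insert by (intro compact_Times) auto
  moreover have "continuous_on (?K \<times> P a) (\<lambda>z. fst z + snd z *\<^sub>R a)"
    by (intro continuous_on_add continuous_on_scaleR_tvs continuous_intros)
  ultimately show ?case
    unfolding eq by (rule compact_continuous_image[rotated])
qed simp

lemma compact_normalised_combinations:
  fixes A :: "'a set"
  assumes "finite A"
  shows "compact {\<Sum>z\<in>A. r z *\<^sub>R z | r. (\<forall>z\<in>A. \<bar>r z\<bar> \<le> 1) \<and> (\<exists>z\<in>A. \<bar>r z\<bar> = 1)}"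
proof -
  define P where "P x z = (if z = x then {-1, 1} else {-1..1::real})" for x z :: 'a
  have unit: "t \<in> {-1, 1} \<longleftrightarrow> \<bar>t\<bar> = 1" and ball: "t \<in> {-1..1} \<longleftrightarrow> \<bar>t\<bar> \<le> 1" for t :: real
    by auto
  have P: "(\<forall>z\<in>A. r z \<in> P x z) \<longleftrightarrow> (\<forall>z\<in>A. \<bar>r z\<bar> \<le> 1) \<and> \<bar>r x\<bar> = 1" if "x \<in> A" for r x
    using that by (auto simp: P_def unit ball)
  have "{\<Sum>z\<in>A. r z *\<^sub>R z | r. (\<forall>z\<in>A. \<bar>r z\<bar> \<le> 1) \<and> (\<exists>z\<in>A. \<bar>r z\<bar> = 1)}
      = (\<Union>x\<in>A. {\<Sum>z\<in>A. r z *\<^sub>R z | r. \<forall>z\<in>A. r z \<in> P x z})" (is "?K = ?U")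
  proof (intro equalityI subsetI)
    fix y
    assume "y \<in> ?K"
    then obtain r x where r: "x \<in> A" "\<forall>z\<in>A. \<bar>r z\<bar> \<le> 1" "\<bar>r x\<bar> = 1" "y = (\<Sum>z\<in>A. r z *\<^sub>R z)"
      by blast
    then have "\<forall>z\<in>A. r z \<in> P x z"
      using P by blast
    then show "y \<in> ?U"
      using r(1,4) by blast
  next
    fix y
    assume "y \<in> ?U"
    then obtain r x where r: "x \<in> A" "\<forall>z\<in>A. r z \<in> P x z" "y = (\<Sum>z\<in>A. r z *\<^sub>R z)"
      by blast
    then have "(\<forall>z\<in>A. \<bar>r z\<bar> \<le> 1) \<and> \<bar>r x\<bar> = 1"
      using P by blast
    then show "y \<in> ?K"
      using r(1,3) by blast
  qed
  moreover have "compact (\<Union>x\<in>A. {\<Sum>z\<in>A. r z *\<^sub>R z | r. \<forall>z\<in>A. r z \<in> P x z})"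
    unfolding P_def using assms by (intro compact_UN compact_finite_combinations) auto
  ultimately show ?thesis
    by simp
qed

lemma coeff_bounding_nbhd_exists:
  fixes A :: "'a set"
  assumes A: "finite A" "independent A"
  obtains Q where "coeff_bounding_nbhd A Q"
proof -
  define K where "K = {\<Sum>z\<in>A. r z *\<^sub>R z | r. (\<forall>z\<in>A. \<bar>r z\<bar> \<le> 1) \<and> (\<exists>z\<in>A. \<bar>r z\<bar> = 1)}"
  have "open (- K)"
    unfolding K_def using compact_normalised_combinations[OF A(1)]
    by (simp add: compact_imp_closed open_Compl)
  moreover have "0 \<notin> K"
  proof
    assume "0 \<in> K"
    then obtain r x where "x \<in> A" "\<bar>r x\<bar> = 1" "(\<Sum>z\<in>A. r z *\<^sub>R z) = 0"
      unfolding K_def by auto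
    moreover have "r x \<noteq> 0"
      using \<open>\<bar>r x\<bar> = 1\<close> by auto
    ultimately show False
      using A(2) unfolding dependent_finite[OF A(1)] by blast
  qed
  ultimately obtain V where V: "open V" "0 \<in> V" "\<And>p q. p \<in> V \<Longrightarrow> q \<in> V \<Longrightarrow> p + q \<in> - K"
    by (metis ComplI open_zero_nbhd_add_subset)
  obtain Q where Q: "open Q" "0 \<in> Q" "Q \<subseteq> V" "\<And>x t. x \<in> Q \<Longrightarrow> \<bar>t\<bar> \<le> 1 \<Longrightarrow> t *\<^sub>R x \<in> Q"
    using balanced_open_zero_nbhd[OF V(1,2)] by blast
  have "\<bar>r x\<bar> < 1" if pq: "p \<in> Q" "q \<in> Q" and sum: "(\<Sum>z\<in>A. r z *\<^sub>R z) = p + q" and x: "x \<in> A"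
    for r p q x
  proof (rule ccontr)
    assume "\<not> \<bar>r x\<bar> < 1"
    then have "1 \<le> \<bar>r x\<bar>"
      by simp
    \<comment> \<open>Dividing by the largest coefficient \<open>l \<ge> 1\<close> lands in \<open>K\<close>, and in \<open>V + V\<close> by balancedness.\<close>
    then obtain l where l: "1 \<le> l" "\<forall>z\<in>A. \<bar>r z / l\<bar> \<le> 1" "\<exists>z\<in>A. \<bar>r z / l\<bar> = 1"
      by (rule exists_normalising_factor[OF A(1) x])
    then have "(\<Sum>z\<in>A. (r z / l) *\<^sub>R z) \<in> K"
      unfolding K_def by (intro CollectI exI[of _ "\<lambda>z. r z / l"] conjI) auto
    moreover have "(\<Sum>z\<in>A. (r z / l) *\<^sub>R z) = (1 / l) *\<^sub>R (\<Sum>z\<in>A. r z *\<^sub>R z)"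
      by (simp add: scaleR_sum_right)
    then have "(\<Sum>z\<in>A. (r z / l) *\<^sub>R z) = (1 / l) *\<^sub>R p + (1 / l) *\<^sub>R q"
      unfolding sum by (simp add: scaleR_add_right)
    moreover have "(1 / l) *\<^sub>R p \<in> V" "(1 / l) *\<^sub>R q \<in> V"
      using Q(3,4) pq l(1) by auto
    ultimately show False
      using V(3) by (metis ComplD)
  qed
  then have "coeff_bounding_nbhd A Q"
    unfolding coeff_bounding_nbhd_def using Q(1,2) by blast
  then show ?thesis
    by (rule that)
qed

lemma continuous_on_representation:
  fixes B :: "'a set"
  assumes B: "independent B" and A: "finite A" "A \<subseteq> B"
    and Q: "coeff_bounding_nbhd A Q" "span (B - A) \<subseteq> Q" and x: "x \<in> A"
  shows "continuous_on (span B) (\<lambda>y. representation B y x)"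
proof (rule continuous_on_additive_real)
  show "y - z \<in> span B \<and> representation B (y - z) x = representation B y x - representation B z x"
    if "y \<in> span B" "z \<in> span B" for y z
    using representation_diff[OF B that(2) that(1)] that by (simp add: span_diff)
  show "\<exists>W. open W \<and> 0 \<in> W \<and> (\<forall>y\<in>span B \<inter> W. \<bar>representation B y x\<bar> < e)" if "e > 0" for e
  proof (intro exI conjI ballI)
    have "open Q" "0 \<in> Q"
      using Q(1) by (auto simp: coeff_bounding_nbhd_def)
    then show "open ((\<lambda>z. e *\<^sub>R z) ` Q)" "0 \<in> (\<lambda>z. e *\<^sub>R z) ` Q"
      using that by (auto intro: open_scaleR_image image_eqI[of 0 _ 0])
    fix y
    assume "y \<in> span B \<inter> (\<lambda>z. e *\<^sub>R z) ` Q"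
    then obtain w where y: "y \<in> span B" "w \<in> Q" "y = e *\<^sub>R w"
      by auto
    \<comment> \<open>Split \<open>y\<close> into its part along \<open>A\<close> and a tail \<open>t\<close>, which \<open>Q\<close> absorbs.\<close>
    define t where "t = y - (\<Sum>z\<in>A. representation B y z *\<^sub>R z)"
    have "t \<in> span (B - A)"
      unfolding t_def by (rule representation_minus_sum_in_span[OF B A y(1)])
    then have "- (1 / e) *\<^sub>R t \<in> Q"
      using Q(2) span_scale by blast
    moreover have "(\<Sum>z\<in>A. (representation B y z / e) *\<^sub>R z) = (1 / e) *\<^sub>R (y - t)"
      unfolding t_def by (simp add: scaleR_sum_right)
    then have "(\<Sum>z\<in>A. (representation B y z / e) *\<^sub>R z) = w + - (1 / e) *\<^sub>R t"
      using y(3) that by (simp add: scaleR_diff_right)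
    ultimately have "\<bar>representation B y x / e\<bar> < 1"
      by (rule coeff_bounding_nbhdD[OF Q(1) y(2) _ _ x])
    then show "\<bar>representation B y x\<bar> < e"
      using that by (simp add: abs_divide)
  qed
qed

lemma abs_cauchy_summable_coeff_bounding_tail:
  fixes S :: "'a set"
  assumes acs: "abs_cauchy_summable S" and A: "finite A" "independent A"
  shows "\<exists>F. finite F \<and> (\<exists>Q. coeff_bounding_nbhd A Q \<and> span (S - F) \<subseteq> Q)"
proof -
  obtain Q where Q: "coeff_bounding_nbhd A Q"
    using coeff_bounding_nbhd_exists[OF A] .
  moreover have "open Q" "0 \<in> Q"
    using Q by (auto simp: coeff_bounding_nbhd_def)
  then obtain F where "finite F" "F \<subseteq> S" "span (S - F) \<subseteq> Q"
    by (rule abs_cauchy_summable_span_small[OF acs])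
  ultimately show ?thesis
    by blast
qed

lemma exists_sequence_coeff_bounding_tails:
  fixes S :: "'a set"
  assumes inf: "infinite S" and acs: "abs_cauchy_summable S"
  obtains b :: "nat \<Rightarrow> 'a" where "inj b" "range b \<subseteq> S - {0}"
    "\<forall>n. independent (b ` {..<n}) \<longrightarrow>
       (\<exists>Q. coeff_bounding_nbhd (b ` {..<n}) Q \<and> span (range b - b ` {..<n}) \<subseteq> Q)"
proof -
  define good where
    "good A F \<longleftrightarrow> finite F \<and> (\<exists>Q. coeff_bounding_nbhd A Q \<and> span (S - F) \<subseteq> Q)" for A F
  \<comment> \<open>\<open>F A\<close> is fixed once and for all, so that all later elements of the sequence can avoid it.\<close>
  define F where "F A = (if finite A \<and> independent A then SOME F. good A F else {})" for A
  have good_F: "good A (F A)" if A: "finite A" "independent A" for A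
  proof -
    have "\<exists>F. good A F"
      unfolding good_def by (rule abs_cauchy_summable_coeff_bounding_tail[OF acs A])
    then show ?thesis
      unfolding F_def using A by (simp add: someI_ex)
  qed
  have finite_F: "finite (F A)" for A
  proof (cases "finite A \<and> independent A")
    case True
    then show ?thesis
      using good_F[of A] unfolding good_def by blast
  next
    case False
    then show ?thesis
      unfolding F_def if_not_P[OF False] by simp
  qed
  have "infinite (S - {0})"
    using inf by simp
  then obtain b :: "nat \<Rightarrow> 'a" where b: "inj b" "range b \<subseteq> S - {0}" "\<forall>n. \<forall>m\<le>n. b n \<notin> F (b ` {..<m})"
    by (rule infinite_avoiding_sequence[where F = F, OF _ finite_F])
  have "\<exists>Q. coeff_bounding_nbhd (b ` {..<n}) Q \<and> span (range b - b ` {..<n}) \<subseteq> Q"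
    if indep: "independent (b ` {..<n})" for n
  proof -
    obtain Q where Q: "coeff_bounding_nbhd (b ` {..<n}) Q" "span (S - F (b ` {..<n})) \<subseteq> Q"
      using good_F[OF _ indep] unfolding good_def by auto
    have "range b - b ` {..<n} \<subseteq> S - F (b ` {..<n})"
    proof
      fix y
      assume "y \<in> range b - b ` {..<n}"
      then obtain m where "y = b m" "n \<le> m"
        by (metis imageI lessThan_iff not_le rangeE Diff_iff)
      then show "y \<in> S - F (b ` {..<n})"
        using b(2,3) by auto
    qed
    then show ?thesis
      using Q span_mono by blast
  qed
  then show ?thesis
    using b(1,2) that by blast
qed

lemma infinite_independent_subset_continuous_coordinates:
  fixes S :: "'a set"
  assumes inf: "infinite S" and acs: "abs_cauchy_summable S"
  obtains B where "B \<subseteq> S" "infinite B" "independent B"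
    "\<And>x. x \<in> B \<Longrightarrow> continuous_on (span B) (\<lambda>y. representation B y x)"
proof -
  obtain b :: "nat \<Rightarrow> 'a" where b: "inj b" "range b \<subseteq> S - {0}"
    "\<forall>n. independent (b ` {..<n}) \<longrightarrow>
       (\<exists>Q. coeff_bounding_nbhd (b ` {..<n}) Q \<and> span (range b - b ` {..<n}) \<subseteq> Q)"
    by (rule exists_sequence_coeff_bounding_tails[OF inf acs])
  have indep: "independent (b ` {..<n})" for n
  proof (induction n)
    case (Suc n)
    obtain Q where Q: "coeff_bounding_nbhd (b ` {..<n}) Q" "span (range b - b ` {..<n}) \<subseteq> Q"
      using b(3) Suc.IH by blast
    have "b n \<in> range b - b ` {..<n}"
      using b(1) by (auto dest: injD)
    then have "span {b n} \<subseteq> Q"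
      using Q(2) span_mono[of "{b n}" "range b - b ` {..<n}"] by auto
    moreover have "b n \<noteq> 0"
      using b(2) by auto
    ultimately have "b n \<notin> span (b ` {..<n})"
      by (intro coeff_bounding_nbhd_not_in_span[OF _ Q(1)]) auto
    then show ?case
      using Suc.IH by (simp add: lessThan_Suc independent_insertI)
  qed (simp add: independent_empty)
  then have "independent (range b)"
    by (rule independent_range_if_prefixes)
  moreover have "continuous_on (span (range b)) (\<lambda>y. representation (range b) y (b j))" for j
  proof -
    obtain Q where Q: "coeff_bounding_nbhd (b ` {..<Suc j}) Q" "span (range b - b ` {..<Suc j}) \<subseteq> Q"
      using b(3) indep by blast
    show ?thesis
      by (rule continuous_on_representation[OF \<open>independent (range b)\<close> _ _ Q]) auto
  qed
  moreover have "range b \<subseteq> S" "infinite (range b)"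
    using b(1,2) range_inj_infinite by auto
  ultimately show ?thesis
    using that by blast
qed

lemma continuous_map_lK:
  fixes B :: "'a set"
  assumes acs: "abs_cauchy_summable B"
  shows "continuous_map (lS B) euclidean (lK B)"
  unfolding continuous_map_atin limitin_canonical_iff
proof (intro ballI topological_tendstoI)
  fix f0 U
  assume f0: "f0 \<in> topspace (lS B)" and U: "open U" "lK B f0 \<in> U"
  have "open {z. z + lK B f0 \<in> U}" "0 \<in> {z. z + lK B f0 \<in> U}"
    using U by (simp_all add: open_translate_preimage)
  then obtain V where V: "open V" "0 \<in> V" "\<And>x y. x \<in> V \<Longrightarrow> y \<in> V \<Longrightarrow> x + y + lK B f0 \<in> U"
    by (rule open_zero_nbhd_add_subset) auto
  obtain F where F: "finite F" "F \<subseteq> B" "span (B - F) \<subseteq> V"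
    by (rule abs_cauchy_summable_span_small[OF acs V(1,2)])
  \<comment> \<open>Near \<open>f0\<close>, the finitely many coordinates in \<open>G\<close> are controlled by the product topology,
    and the remaining ones only contribute to \<open>span (B - F)\<close>.\<close>
  define G where "G = F \<union> {b\<in>B. f0 b \<noteq> 0}"
  have G: "finite G" "G \<subseteq> B"
    using F f0 by (auto simp: G_def topspace_lS)
  define N where "N = {f \<in> topspace (lS B). sum f G + - sum f0 G \<in> V}"
  have "continuous_map (lS B) euclidean (\<lambda>f. sum f G)"
    using G by (intro continuous_map_sum_euclidean continuous_map_lS_eval) auto
  then have "openin (lS B) {f \<in> topspace (lS B). sum f G \<in> {z. z + - sum f0 G \<in> V}}"
    by (rule openin_continuous_map_preimage) (simp only: open_openin[symmetric] open_translate_preimage[OF V(1)])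
  then have "openin (lS B) N"
    unfolding N_def by simp
  moreover have "f0 \<in> N"
    unfolding N_def using f0 V(2) by simp
  moreover have "lK B f \<in> U" if "f \<in> N" for f
  proof -
    have f: "f \<in> topspace (lS B)" "sum f G + - sum f0 G \<in> V"
      using that unfolding N_def by auto
    have "lK B f - sum f G \<in> V"
      using lK_minus_sum_in_span[OF f(1) G] F(3) span_mono[of "B - G" "B - F"] G_def by blast
    then have "(sum f G + - sum f0 G) + (lK B f - sum f G) + lK B f0 \<in> U"
      using V(3) f(2) by blast
    moreover have "lK B f0 = sum f0 G"
      using G by (intro lK_eq_sum) (auto simp: G_def)
    ultimately show ?thesis
      by (simp add: algebra_simps)
  qed
  ultimately show "\<forall>\<^sub>F f in atin (lS B) f0. lK B f \<in> U"
    unfolding eventually_atin by blast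
qed

lemma continuous_map_representation_lS:
  fixes B :: "'a set"
  assumes coord: "\<And>x. x \<in> B \<Longrightarrow> continuous_on (span B) (\<lambda>y. representation B y x)"
  shows "continuous_map (top_of_set (span B)) (lS B) (\<lambda>y. restrict (\<lambda>x. representation B y x *\<^sub>R x) B)"
  unfolding lS_def continuous_map_in_subtopology continuous_map_componentwise
proof (intro conjI ballI subsetI funcsetI)
  fix x
  assume "x \<in> B"
  have "continuous_on (span B) (\<lambda>y. representation B y x *\<^sub>R x)"
    by (intro continuous_on_scaleR_tvs coord[OF \<open>x \<in> B\<close>] continuous_on_const)
  then show "continuous_map (top_of_set (span B)) (real_line_top x)
      (\<lambda>y. restrict (\<lambda>x. representation B y x *\<^sub>R x) B x)"
    unfolding real_line_top_def continuous_map_in_subtopology using \<open>x \<in> B\<close> by auto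
next
  fix y
  have "{x\<in>B. restrict (\<lambda>x. representation B y x *\<^sub>R x) B x \<noteq> 0} \<subseteq> {x. representation B y x \<noteq> 0}"
    by auto
  then have "finite {x\<in>B. restrict (\<lambda>x. representation B y x *\<^sub>R x) B x \<noteq> 0}"
    by (rule finite_subset) (rule finite_representation)
  then show "restrict (\<lambda>x. representation B y x *\<^sub>R x) B \<in> {f. finite {b\<in>B. f b \<noteq> 0}}"
    by simp
qed auto

lemma embedding_map_lK:
  fixes B :: "'a set"
  assumes B: "independent B" and acs: "abs_cauchy_summable B"
    and coord: "\<And>x. x \<in> B \<Longrightarrow> continuous_on (span B) (\<lambda>y. representation B y x)"
  shows "embedding_map (lS B) euclidean (lK B)"
proof -
  let ?g = "\<lambda>y. restrict (\<lambda>x. representation B y x *\<^sub>R x) B"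
  have "continuous_map (lS B) (top_of_set (span B)) (lK B)"
    using continuous_map_lK[OF acs] lK_in_span by (auto simp: continuous_map_in_subtopology)
  moreover have "?g (lK B f) = f" if "f \<in> topspace (lS B)" for f
  proof (rule extensionalityI)
    show "f \<in> extensional B"
      using that by (auto simp: topspace_lS PiE_iff)
  qed (use representation_lK[OF B that] in auto)
  ultimately have "section_map (lS B) (top_of_set (span B)) (lK B)"
    unfolding section_map_def retraction_maps_def
    using continuous_map_representation_lS[OF coord] by blast
  then show ?thesis
    using section_imp_embedding_map embedding_map_in_subtopology by blast
qed

end

theorem theorem10p4:
  fixes S :: "'a::{real_vector, topological_ab_group_add, t2_space} set"
  assumes tvs: "continuous_on UNIV (\<lambda>p::real \<times> 'a. fst p *\<^sub>R snd p)"
    and inf: "infinite S"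
    and acs: "abs_cauchy_summable S"
  shows "\<exists>B. B \<subseteq> S \<and> 0 \<notin> B \<and> infinite B \<and>
             embedding_map (lS B) euclidean (lK B)"
proof -
  obtain B where B: "B \<subseteq> S" "infinite B" "independent B"
    "\<And>x. x \<in> B \<Longrightarrow> continuous_on (span B) (\<lambda>y. representation B y x)"
    using infinite_independent_subset_continuous_coordinates[OF tvs inf acs] by blast
  moreover have "embedding_map (lS B) euclidean (lK B)"
    using embedding_map_lK[OF tvs B(3) abs_cauchy_summable_subset[OF acs B(1)] B(4)] .
  ultimately show ?thesis
    using dependent_zero by blast
qed

end
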